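(* Let $p$ be a prime and $n, k$ positive integers, $d = \gcd(n,k)$. Let $L(X) = \sum_{i=0}^t \alpha_i X^{p^i}$, $\alpha_i \in \mathbb{F}_p$, be a $p$-linearized polynomial without multiple roots, and let $L'$ be a $p$-linearized polynomial over $\mathbb{F}_p$ with $X - X^{p^k} = L \circ L'(X)$. Let $l'$ be the conventional $p$-associate of $L'$, let $w = (l', t_d^k)$, $u = l'/w$, and let $U$ be the linearized $p$-associate of $u$. Then $$\ker(L) \cap \mathbb{F}_{p^n} = U(\mathbb{F}_{p^d}).$$
   Context: For positive integers $d \mid k$, $t_d^k(X) = \sum_{i=0}^{k/d-1} X^{di} \in \mathbb{F}_p[X]$. For $l(X) = \sum \alpha_i X^i \in \mathbb{F}_p[X]$, its linearized $p$-associate is $\sum \alpha_i X^{p^i}$, and conversely $l$ is the conventional $p$-associate of that linearized polynomial. $(f,g)$ denotes the monic gcd in $\mathbb{F}_p[X]$. $\ker(L)$ is the set of roots of $L$ in an algebraic closure of $\mathbb{F}_p$; $U(\mathbb{F}_{p^d}) = \{U(x): x \in \mathbb{F}_{p^d}\}$. *)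

theory Defs
  imports "HOL-Computational_Algebra.Computational_Algebra" "Berlekamp_Zassenhaus.Finite_Field"
begin

text \<open>The prime field F_p is the type 'p mod_ring with CARD('p) = p prime.
  Polynomials over F_p are of type 'p mod_ring poly.\<close>

definition tpoly :: "nat \<Rightarrow> nat \<Rightarrow> 'p::prime_card mod_ring poly" where
  "tpoly d k = (\<Sum>i<k div d. Polynomial.monom 1 (d * i))"

definition linearized :: "'p::prime_card mod_ring poly \<Rightarrow> 'p mod_ring poly" where
  "linearized l = (\<Sum>i\<le>degree l. Polynomial.monom (Polynomial.coeff l i) (CARD('p) ^ i))"

definition emb :: "'p::prime_card mod_ring \<Rightarrow> 'a::field" where
  "emb c = of_int (to_int_mod_ring c)"

definition embp :: "'p::prime_card mod_ring poly \<Rightarrow> 'a::field poly" where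
  "embp f = map_poly emb f"

text \<open>ker(L): the roots of L in the algebraically closed field 'a\<close>
definition ker :: "'p::prime_card mod_ring poly \<Rightarrow> 'a::field set" where
  "ker L = {x. poly (embp L) x = 0}"

text \<open>F_{p^m} as the subfield {x. x^(p^m) = x} of 'a\<close>
definition subfield :: "nat \<Rightarrow> nat \<Rightarrow> 'a::field set" where
  "subfield p m = {x. x ^ (p ^ m) = x}"

end

theory Submission
  imports Defs
begin

(* Evaluating linearized p-associates in a field of characteristic p turns multiplication of
   conventional associates into composition. Hence the kernel of the linearized associate of f
   depends only on f up to units, grows along divisibility, and the kernel of gcd(f, g) is the
   intersection of the kernels; over an algebraically closed field, U moreover maps the kernel
   of the associate of v u onto that of v. The hypothesis gives l l' = 1 - X^k =
   (1 - X^d) t_d^k, and cancelling w = gcd(l', t_d^k) yields 1 - X^d = v u with v associated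
   to gcd(l, 1 - X^d). Since ker L lies in F_{p^k}, the kernel of X - X^(p^k), we get
   ker L \<inter> F_{p^n} = ker L \<inter> F_{p^d} = ker V = U(F_{p^d}). *)

lemma emb_0 [simp]: "emb 0 = 0"
  unfolding emb_def by (simp add: zero_mod_ring.rep_eq to_int_mod_ring.rep_eq)

lemma emb_field_hom:
  assumes ch: "CHAR('a::field) = CARD('p::prime_card)"
  shows "field_hom (emb :: 'p mod_ring \<Rightarrow> 'a)"
proof
  fix x y :: "'p mod_ring"
  have c: "int CARD('p) = int CHAR('a)" using ch by simp
  show "(emb (x + y) :: 'a) = emb x + emb y"
    unfolding emb_def to_int_mod_ring_add c by simp
  show "(emb (x * y) :: 'a) = emb x * emb y"
    unfolding emb_def to_int_mod_ring_mult c by simp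
  show "(emb 1 :: 'a) = 1"
    unfolding emb_def by (simp add: one_mod_ring.rep_eq to_int_mod_ring.rep_eq)
  show "(emb 0 :: 'a) = 0" by simp
qed

lemma emb_power_card:
  assumes ch: "CHAR('a::field) = CARD('p::prime_card)"
  shows "(emb c :: 'a) ^ CARD('p) = emb (c :: 'p mod_ring)"
proof -
  interpret field_hom "emb :: 'p mod_ring \<Rightarrow> 'a" by (rule emb_field_hom[OF ch])
  have "(emb c :: 'a) ^ CARD('p) = emb (c ^ CARD('p))" by (simp add: hom_distribs)
  then show ?thesis using finite_field_power_card_eq_same[of c] by simp
qed

definition lin_eval :: "'p::prime_card mod_ring poly \<Rightarrow> 'a::field \<Rightarrow> 'a" where
  "lin_eval f x = (\<Sum>i\<le>degree f. emb (Polynomial.coeff f i) * x ^ (CARD('p) ^ i))"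

lemma poly_embp_linearized:
  assumes ch: "CHAR('a::field) = CARD('p::prime_card)"
  shows "poly (embp (linearized f)) = (lin_eval (f :: 'p mod_ring poly) :: 'a \<Rightarrow> 'a)"
proof
  fix x :: 'a
  interpret field_hom "emb :: 'p mod_ring \<Rightarrow> 'a" by (rule emb_field_hom[OF ch])
  interpret mp: map_poly_comm_ring_hom "emb :: 'p mod_ring \<Rightarrow> 'a" ..
  show "poly (embp (linearized f)) x = lin_eval f x"
    unfolding embp_def linearized_def lin_eval_def
    by (simp add: mp.hom_sum map_poly_monom poly_sum poly_monom)
qed

lemma ker_linearized:
  assumes ch: "CHAR('a::field) = CARD('p::prime_card)"
  shows "(ker (linearized f) :: 'a set) = {x. lin_eval (f :: 'p mod_ring poly) x = 0}"
  unfolding ker_def by (simp add: poly_embp_linearized[OF ch])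

lemma lin_eval_eq_sum_lessThan:
  fixes f :: "'p::prime_card mod_ring poly"
  assumes "degree f < N"
  shows "lin_eval f x = (\<Sum>i<N. emb (Polynomial.coeff f i) * x ^ (CARD('p) ^ i))"
  unfolding lin_eval_def
  by (rule sum.mono_neutral_left) (use assms in \<open>auto simp: coeff_eq_0\<close>)

lemma lin_eval_0 [simp]: "lin_eval 0 x = 0"
  by (simp add: lin_eval_def)

lemma lin_eval_at_0 [simp]: "lin_eval (f :: 'p::prime_card mod_ring poly) (0 :: 'a::field) = 0"
proof -
  have "CARD('p) > 0" using prime_card[where 'a='p] prime_gt_0_nat by blast
  then show ?thesis
    by (simp add: lin_eval_def power_0_left)
qed

lemma lin_eval_add:
  assumes ch: "CHAR('a::field) = CARD('p::prime_card)"
  shows "lin_eval (f + g :: 'p mod_ring poly) (x :: 'a) = lin_eval f x + lin_eval g x"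
proof -
  interpret field_hom "emb :: 'p mod_ring \<Rightarrow> 'a" by (rule emb_field_hom[OF ch])
  define N where "N = Suc (degree f + degree g)"
  have "degree (f + g) < N" "degree f < N" "degree g < N"
    unfolding N_def using degree_add_le_max[of f g] by linarith+
  then show ?thesis
    by (simp add: lin_eval_eq_sum_lessThan[where N=N] sum.distrib distrib_right hom_distribs)
qed

lemma lin_eval_smult:
  assumes ch: "CHAR('a::field) = CARD('p::prime_card)"
  shows "lin_eval (Polynomial.smult c f :: 'p mod_ring poly) (x :: 'a) = emb c * lin_eval f x"
proof -
  interpret field_hom "emb :: 'p mod_ring \<Rightarrow> 'a" by (rule emb_field_hom[OF ch])
  define N where "N = Suc (degree f)"
  have "degree (Polynomial.smult c f) < N" "degree f < N"
    unfolding N_def using degree_smult_le[of c f] by linarith+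
  then show ?thesis
    by (simp add: lin_eval_eq_sum_lessThan[where N=N] sum_distrib_left mult.assoc hom_distribs)
qed

lemma lin_eval_diff:
  assumes ch: "CHAR('a::field) = CARD('p::prime_card)"
  shows "lin_eval (f - g :: 'p mod_ring poly) (x :: 'a) = lin_eval f x - lin_eval g x"
proof -
  interpret field_hom "emb :: 'p mod_ring \<Rightarrow> 'a" by (rule emb_field_hom[OF ch])
  have "f - g = f + Polynomial.smult (-1) g" by simp
  then show ?thesis
    by (simp only: lin_eval_add[OF ch] lin_eval_smult[OF ch]) (simp add: hom_distribs)
qed

lemma lin_eval_pCons:
  "lin_eval (pCons c f :: 'p::prime_card mod_ring poly) (x :: 'a::field)
     = emb c * x + lin_eval f (x ^ CARD('p))"
proof -
  define N where "N = Suc (degree f)"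
  have "degree (pCons c f) < Suc N" "degree f < N"
    unfolding N_def using degree_pCons_le[of c f] by linarith+
  then show ?thesis
    by (simp add: lin_eval_eq_sum_lessThan sum.lessThan_Suc_shift power_mult del: sum.lessThan_Suc)
qed

lemma lin_eval_power_card:
  assumes ch: "CHAR('a::field) = CARD('p::prime_card)"
  shows "lin_eval (f :: 'p mod_ring poly) (x ^ CARD('p)) = lin_eval f (x :: 'a) ^ CARD('p)"
proof -
  have "prime CHAR('a)" using ch prime_card by simp
  then show ?thesis unfolding lin_eval_def
    by (subst freshmans_dream_sum[OF _ ch[symmetric]])
       (simp_all add: power_mult_distrib emb_power_card[OF ch] mult.commute flip: power_mult)
qed

lemma lin_eval_mult:
  assumes ch: "CHAR('a::field) = CARD('p::prime_card)"
  shows "lin_eval (f * g :: 'p mod_ring poly) (x :: 'a) = lin_eval f (lin_eval g x)"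
proof (induction f)
  case (pCons c f)
  have "lin_eval (pCons c f * g) x = emb c * lin_eval g x + lin_eval (f * g) (x ^ CARD('p))"
    by (simp add: lin_eval_add[OF ch] lin_eval_smult[OF ch] lin_eval_pCons)
  also have "\<dots> = lin_eval (pCons c f) (lin_eval g x)"
    by (simp add: lin_eval_pCons lin_eval_power_card[OF ch] pCons.IH)
  finally show ?case .
qed simp

lemma lin_eval_monom_1:
  assumes ch: "CHAR('a::field) = CARD('p::prime_card)"
  shows "lin_eval (Polynomial.monom 1 m :: 'p mod_ring poly) (x :: 'a) = x ^ (CARD('p) ^ m)"
proof -
  interpret field_hom "emb :: 'p mod_ring \<Rightarrow> 'a" by (rule emb_field_hom[OF ch])
  have "emb (Polynomial.coeff (Polynomial.monom 1 m :: 'p mod_ring poly) i) * x ^ (CARD('p) ^ i)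
     = (if i = m then x ^ (CARD('p) ^ m) else 0)" for i
    by (simp add: coeff_monom)
  then show ?thesis unfolding lin_eval_def by (simp add: degree_monom_eq)
qed

lemma lin_eval_1:
  assumes ch: "CHAR('a::field) = CARD('p::prime_card)"
  shows "lin_eval (1 :: 'p mod_ring poly) (x :: 'a) = x"
  using lin_eval_monom_1[OF ch, of 0 x] by (simp add: monom_0 one_pCons)

lemma coeff_linearized_power_card:
  "Polynomial.coeff (linearized f) (CARD('p) ^ i) = Polynomial.coeff (f :: 'p::prime_card mod_ring poly) i"
proof -
  have "CARD('p) > 1" using prime_card[where 'a='p] prime_gt_1_nat by blast
  then have "Polynomial.coeff (linearized f) (CARD('p) ^ i)
      = (\<Sum>j\<le>degree f. if j = i then Polynomial.coeff f j else 0)"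
    unfolding linearized_def coeff_sum by (intro sum.cong refl) (auto simp: coeff_monom)
  also have "\<dots> = Polynomial.coeff f i"
    by (auto simp: coeff_eq_0)
  finally show ?thesis .
qed

lemma linearized_eq_sum_lessThan:
  fixes f :: "'p::prime_card mod_ring poly"
  assumes "degree f < N"
  shows "linearized f = (\<Sum>i<N. Polynomial.monom (Polynomial.coeff f i) (CARD('p) ^ i))"
  unfolding linearized_def
  by (rule sum.mono_neutral_left) (use assms in \<open>auto simp: coeff_eq_0\<close>)

lemma linearized_one_minus_monom:
  "linearized (1 - Polynomial.monom 1 k :: 'p::prime_card mod_ring poly)
     = [:0, 1:] - Polynomial.monom 1 (CARD('p) ^ k)"
proof -
  have "degree (1 - Polynomial.monom 1 k :: 'p mod_ring poly) \<le> k"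
    by (intro degree_diff_le) (simp_all add: degree_monom_le)
  then have deg: "degree (1 - Polynomial.monom 1 k :: 'p mod_ring poly) < Suc k" by simp
  have "linearized (1 - Polynomial.monom 1 k :: 'p mod_ring poly)
      = (\<Sum>i<Suc k. (if i = 0 then Polynomial.monom 1 (CARD('p) ^ i) else 0)
                     - (if i = k then Polynomial.monom 1 (CARD('p) ^ i) else 0))"
    unfolding linearized_eq_sum_lessThan[OF deg]
    by (intro sum.cong refl) (auto simp: coeff_monom simp flip: diff_monom)
  also have "\<dots> = Polynomial.monom 1 1 - Polynomial.monom 1 (CARD('p) ^ k)"
    by (simp only: sum_subtractf sum.delta) simp
  also have "Polynomial.monom 1 1 = ([:0, 1:] :: 'p mod_ring poly)"
    by (simp add: monom_Suc monom_0)
  finally show ?thesis .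
qed

lemma surj_lin_eval:
  assumes ch: "CHAR('a::alg_closed_field) = CARD('p::prime_card)" and "f \<noteq> 0"
  shows "surj (lin_eval (f :: 'p mod_ring poly) :: 'a \<Rightarrow> 'a)"
  unfolding surj_def
proof
  fix y :: 'a
  interpret field_hom "emb :: 'p mod_ring \<Rightarrow> 'a" by (rule emb_field_hom[OF ch])
  define Q :: "'a poly" where "Q = embp (linearized f)"
  have "Polynomial.coeff Q (CARD('p) ^ degree f) = emb (lead_coeff f)"
    unfolding Q_def embp_def by (simp add: coeff_linearized_power_card)
  also have "\<dots> \<noteq> 0" using \<open>f \<noteq> 0\<close> by simp
  finally have "CARD('p) ^ degree f \<le> degree Q" by (rule le_degree)
  moreover have "CARD('p) ^ degree f > 0" using prime_card[where 'a='p] prime_gt_0_nat by simp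
  ultimately have "degree Q > 0" by linarith
  then have "degree (Q + [:-y:]) > 0" by (subst degree_add_eq_left) auto
  then obtain x where "poly (Q + [:-y:]) x = 0" using alg_closed_imp_poly_has_root by blast
  then show "\<exists>x. y = lin_eval f x" unfolding Q_def by (auto simp: poly_embp_linearized[OF ch])
qed

lemma lin_eval_inject:
  assumes ch: "CHAR('a::alg_closed_field) = CARD('p::prime_card)"
    and eq: "\<And>x :: 'a. lin_eval f x = lin_eval g x"
  shows "f = (g :: 'p mod_ring poly)"
proof (rule ccontr)
  assume "f \<noteq> g"
  then obtain x :: 'a where "1 = lin_eval (f - g) x"
    using surj_lin_eval[OF ch] by (metis right_minus_eq surjD)
  then show False by (simp add: lin_eval_diff[OF ch] eq)
qed

(* The field 'a only serves as a domain on which linearized polynomials are compared by value. *)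
lemma mult_eq_of_pcompose_linearized:
  assumes ch: "CHAR('a::alg_closed_field) = CARD('p::prime_card)"
    and "pcompose (linearized f) (linearized g) = linearized (h :: 'p mod_ring poly)"
  shows "f * g = h"
proof (rule lin_eval_inject[OF ch])
  fix x :: 'a
  interpret field_hom "emb :: 'p mod_ring \<Rightarrow> 'a" by (rule emb_field_hom[OF ch])
  have "poly (embp (pcompose (linearized f) (linearized g))) x = lin_eval f (lin_eval g x)"
    by (simp add: embp_def map_poly_pcompose poly_pcompose
        flip: poly_embp_linearized[OF ch, unfolded embp_def])
  then show "lin_eval (f * g) x = lin_eval h x"
    using assms(2) by (simp add: lin_eval_mult[OF ch] poly_embp_linearized[OF ch])
qed

lemma ker_linearized_mono:
  assumes ch: "CHAR('a::field) = CARD('p::prime_card)" and "f dvd (g :: 'p mod_ring poly)"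
  shows "(ker (linearized f) :: 'a set) \<subseteq> ker (linearized g)"
proof
  fix x :: 'a
  obtain h where "g = h * f" using \<open>f dvd g\<close> by (metis dvd_def mult.commute)
  moreover assume "x \<in> ker (linearized f)"
  ultimately show "x \<in> ker (linearized g)"
    by (simp add: ker_linearized[OF ch] lin_eval_mult[OF ch])
qed

lemma ker_linearized_normalize:
  assumes ch: "CHAR('a::field) = CARD('p::prime_card)"
  shows "(ker (linearized (normalize f)) :: 'a set) = ker (linearized (f :: 'p mod_ring poly))"
  by (intro equalityI ker_linearized_mono[OF ch]) simp_all

lemma ker_linearized_gcd:
  assumes ch: "CHAR('a::field) = CARD('p::prime_card)"
  shows "(ker (linearized (gcd f g)) :: 'a set)
           = ker (linearized f) \<inter> ker (linearized (g :: 'p mod_ring poly))"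
proof (intro equalityI Int_greatest ker_linearized_mono[OF ch] subsetI)
  fix x :: 'a
  assume "x \<in> ker (linearized f) \<inter> ker (linearized g)"
  then have "lin_eval f x = 0" "lin_eval g x = 0" by (simp_all add: ker_linearized[OF ch])
  obtain a b where "gcd f g = a * f + b * g"
    using bezout_coefficients_fst_snd by metis
  then have "lin_eval (gcd f g) x = lin_eval a (lin_eval f x) + lin_eval b (lin_eval g x)"
    by (simp add: lin_eval_add[OF ch] lin_eval_mult[OF ch])
  then show "x \<in> ker (linearized (gcd f g))"
    by (simp add: ker_linearized[OF ch] \<open>lin_eval f x = 0\<close> \<open>lin_eval g x = 0\<close>)
qed simp_all

lemma ker_linearized_one_minus_monom:
  assumes ch: "CHAR('a::field) = CARD('p::prime_card)"
  shows "(ker (linearized (1 - Polynomial.monom 1 m :: 'p mod_ring poly)) :: 'a set)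
           = subfield CARD('p) m"
  unfolding ker_linearized[OF ch] subfield_def
  by (auto simp: lin_eval_diff[OF ch] lin_eval_1[OF ch] lin_eval_monom_1[OF ch])

lemma image_ker_linearized:
  assumes ch: "CHAR('a::alg_closed_field) = CARD('p::prime_card)" and "u \<noteq> 0"
  shows "poly (embp (linearized u)) ` ker (linearized (v * u))
           = (ker (linearized (v :: 'p mod_ring poly)) :: 'a set)"
proof (intro equalityI subsetI)
  fix y :: 'a
  assume "y \<in> ker (linearized v)"
  moreover obtain x where "y = lin_eval u x"
    using surj_lin_eval[OF ch \<open>u \<noteq> 0\<close>] by (metis surjD)
  ultimately show "y \<in> poly (embp (linearized u)) ` ker (linearized (v * u))"
    by (simp add: ker_linearized[OF ch] poly_embp_linearized[OF ch] lin_eval_mult[OF ch])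
qed (auto simp: ker_linearized[OF ch] poly_embp_linearized[OF ch] lin_eval_mult[OF ch])

lemma subfield_mono:
  assumes "m dvd n"
  shows "subfield q m \<subseteq> (subfield q n :: 'a::field set)"
proof
  fix x :: 'a
  assume x: "x \<in> subfield q m"
  obtain j where "n = m * j" using assms by blast
  moreover have "x ^ (q ^ (m * j)) = x" for j
  proof (induction j)
    case (Suc j)
    have "x ^ (q ^ (m * Suc j)) = (x ^ (q ^ m)) ^ (q ^ (m * j))"
      by (simp add: power_add power_mult)
    then show ?case using Suc x by (simp add: subfield_def)
  qed simp
  ultimately show "x \<in> subfield q n" by (simp add: subfield_def)
qed

lemma subfield_Int_subfield:
  "subfield q m \<inter> subfield q n = (subfield q (gcd m n) :: 'a::field set)"
proof (intro equalityI Int_greatest subfield_mono subsetI)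
  fix x :: 'a
  assume x: "x \<in> subfield q m \<inter> subfield q n"
  show "x \<in> subfield q (gcd m n)"
  proof (cases "m = 0")
    case False
    then obtain a b where ab: "m * a = n * b + gcd m n" using bezout_nat by blast
    have "x = x ^ (q ^ (m * a))"
      using x subfield_mono[of m "m * a" q] by (auto simp: subfield_def)
    also have "\<dots> = (x ^ (q ^ (n * b))) ^ (q ^ gcd m n)"
      by (simp add: ab power_add power_mult)
    also have "\<dots> = x ^ (q ^ gcd m n)"
      using x subfield_mono[of n "n * b" q] by (auto simp: subfield_def)
    finally show ?thesis by (simp add: subfield_def)
  qed (use x in simp)
qed simp_all

lemma one_minus_monom_mult_tpoly:
  assumes "d dvd k"
  shows "(1 - Polynomial.monom 1 d) * tpoly d k = 1 - Polynomial.monom 1 k"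
proof -
  have tpoly_eq: "tpoly d k = (\<Sum>i<k div d. Polynomial.monom 1 d ^ i)"
    unfolding tpoly_def by (simp add: monom_power)
  have "(1 - Polynomial.monom 1 d) * tpoly d k = 1 - Polynomial.monom 1 d ^ (k div d)"
    unfolding tpoly_eq by (rule one_diff_power_eq[symmetric])
  also have "Polynomial.monom 1 d ^ (k div d) = Polynomial.monom 1 k"
    using assms by (simp add: monom_power)
  finally show ?thesis .
qed

lemma div_gcd_dvd_with_gcd_cofactor:
  fixes a b c e :: "'a::semiring_gcd"
  assumes eq: "a * b = c * e" and "b \<noteq> 0"
  obtains v where "c = v * (b div gcd b e)" and "gcd a c = normalize v"
proof -
  define g where "g = gcd b e"
  define u where "u = b div g"
  define e' where "e' = e div g"
  have "g \<noteq> 0" using \<open>b \<noteq> 0\<close> by (simp add: g_def)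
  have b: "b = u * g" and e: "e = e' * g" by (simp_all add: u_def e'_def g_def)
  have "coprime u e'" unfolding u_def e'_def g_def using \<open>b \<noteq> 0\<close> by (simp add: div_gcd_coprime)
  have "a * u * g = c * e' * g" using eq by (simp add: b e ac_simps)
  then have a_u: "a * u = c * e'" using \<open>g \<noteq> 0\<close> by simp
  then have "u dvd c" using \<open>coprime u e'\<close> by (metis coprime_dvd_mult_left_iff dvd_triv_right)
  then obtain v where c: "c = v * u" by (metis dvd_def mult.commute)
  have "u \<noteq> 0" using \<open>b \<noteq> 0\<close> b by auto
  moreover have "a * u = (v * e') * u" using a_u by (simp add: c ac_simps)
  ultimately have "a = v * e'" by simp
  then have "gcd a c = normalize v"
    using \<open>coprime u e'\<close> by (simp add: c gcd_mult_left coprime_commute)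
  with c show thesis by (intro that) (simp_all add: u_def g_def)
qed

lemma one_minus_monom_nonzero:
  assumes "m > 0"
  shows "1 - Polynomial.monom 1 m \<noteq> (0 :: 'a::comm_ring_1 poly)"
proof -
  have "Polynomial.coeff (1 - Polynomial.monom 1 m :: 'a poly) 0 = 1"
    using assms by (simp add: coeff_monom)
  then show ?thesis by (metis coeff_0 zero_neq_one)
qed

theorem lemma2:
  fixes l l' :: "'p::prime_card mod_ring poly"
    and n k :: nat
  assumes "CHAR('a::alg_closed_field) = CARD('p)"
    and "n > 0" and "k > 0"
    and "rsquarefree (embp (linearized l) :: 'a poly)"
    and "pcompose (linearized l) (linearized l') = [:0, 1:] - Polynomial.monom 1 (CARD('p) ^ k)"
  shows "let d = gcd n k; w = gcd l' (tpoly d k); u = l' div w; U = linearized u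
         in (ker (linearized l) \<inter> subfield CARD('p) n :: 'a set)
            = (\<lambda>x. poly (embp U) x) ` subfield CARD('p) d"
proof -
  note ch = assms(1)
  define d where "d = gcd n k"
  define u where "u = l' div gcd l' (tpoly d k)"
  have l_l': "l * l' = 1 - Polynomial.monom 1 k"
    using assms(5) by (intro mult_eq_of_pcompose_linearized[OF ch])
      (simp add: linearized_one_minus_monom)
  then have "l * l' = (1 - Polynomial.monom 1 d) * tpoly d k"
    by (simp add: one_minus_monom_mult_tpoly d_def)
  moreover have "l' \<noteq> 0"
    using l_l' one_minus_monom_nonzero[OF \<open>k > 0\<close>] by (metis mult_zero_right)
  ultimately obtain v where
    v: "1 - Polynomial.monom 1 d = v * u" "gcd l (1 - Polynomial.monom 1 d) = normalize v"
    unfolding u_def by (rule div_gcd_dvd_with_gcd_cofactor)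
  have "d > 0" using \<open>n > 0\<close> by (simp add: d_def)
  then have "u \<noteq> 0" using v(1) one_minus_monom_nonzero by (metis mult_zero_right)
  have "(ker (linearized l) :: 'a set) \<subseteq> subfield CARD('p) k"
    using ker_linearized_mono[OF ch dvd_triv_left[of l l']]
    by (simp add: l_l' ker_linearized_one_minus_monom[OF ch])
  then have "ker (linearized l) \<inter> subfield CARD('p) n
      = ker (linearized l) \<inter> (subfield CARD('p) d :: 'a set)"
    using subfield_Int_subfield[of "CARD('p)" n k, folded d_def] by blast
  also have "\<dots> = ker (linearized (gcd l (1 - Polynomial.monom 1 d)))"
    by (simp add: ker_linearized_gcd[OF ch] ker_linearized_one_minus_monom[OF ch])
  also have "\<dots> = ker (linearized v)"
    by (simp add: v(2) ker_linearized_normalize[OF ch])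
  also have "\<dots> = poly (embp (linearized u)) ` ker (linearized (v * u))"
    by (rule image_ker_linearized[OF ch \<open>u \<noteq> 0\<close>, symmetric])
  also have "\<dots> = poly (embp (linearized u)) ` subfield CARD('p) d"
    by (simp flip: v(1) add: ker_linearized_one_minus_monom[OF ch])
  finally show ?thesis unfolding Let_def d_def u_def .
qed

end
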